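(* Let $N\ge1$ and $T_{\rm poll}\ge 1$ be integers, and let $\tau^1,\dots,\tau^N$ be i.i.d. geometric random variables with parameter $p$, i.e. $\mathbb P(\tau^j>t)=(1-p)^t$ for all $t\in\mathbb N\cup\{0\}$. Define $$M=\min\{m\ge 1:\ \exists\, j\in\{1,\dots,N\}\text{ such that }\tau^j\le mT_{\rm poll}\},\qquad K=\min\{j\in\{1,\dots,N\}:\ \tau^j\le MT_{\rm poll}\},$$ $$\xi=(N-1)(M-1)T_{\rm poll}+(K-1)T_{\rm poll}+\tau^K.$$ Then $\xi$ has the same law as $\tau^1$. *)

theory Defs
  imports "HOL-Probability.Probability"
begin

definition Mpoll :: "nat \<Rightarrow> nat \<Rightarrow> (nat \<Rightarrow> 'a \<Rightarrow> nat) \<Rightarrow> 'a \<Rightarrow> nat" where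
  "Mpoll N T \<tau> x = (LEAST m. 1 \<le> m \<and> (\<exists>j\<in>{1..N}. \<tau> j x \<le> m * T))"

definition Kidx :: "nat \<Rightarrow> nat \<Rightarrow> (nat \<Rightarrow> 'a \<Rightarrow> nat) \<Rightarrow> 'a \<Rightarrow> nat" where
  "Kidx N T \<tau> x = (LEAST j. j \<in> {1..N} \<and> \<tau> j x \<le> Mpoll N T \<tau> x * T)"

text \<open>xi = (N-1)(M-1)T + (K-1)T + tau^K (M, K >= 1, so nat subtraction is exact)\<close>
definition xi :: "nat \<Rightarrow> nat \<Rightarrow> (nat \<Rightarrow> 'a \<Rightarrow> nat) \<Rightarrow> 'a \<Rightarrow> nat" where
  "xi N T \<tau> x = (N - 1) * (Mpoll N T \<tau> x - 1) * T + (Kidx N T \<tau> x - 1) * T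
                 + \<tau> (Kidx N T \<tau> x) x"

end

theory Submission
  imports Defs
begin

text \<open>Concatenating the polling windows of length \<open>T\<close> of the clocks \<open>1, \<dots>, N\<close> round after round
  tiles the positive integers, and \<open>\<xi> = n\<close> happens exactly when the instant \<open>n\<close>, lying in the
  window of clock \<open>k\<close> in round \<open>m\<close>, is the first ring seen along this tiling: the clocks before
  \<open>k\<close> survive \<open>m\<close> rounds, clock \<open>k\<close> rings at its offset in round \<open>m\<close> and the clocks after \<open>k\<close>
  survive \<open>m - 1\<close> rounds. By independence this has probability \<open>(1 - p)^(n-1) p\<close>: the \<open>n - 1\<close>
  instants before \<open>n\<close> on the tiling are all quiet, as for a single geometric clock.\<close>

lemma Mpoll_spec:
  assumes "N \<ge> 1" "T \<ge> 1"
  shows "1 \<le> Mpoll N T \<tau> x" and "\<exists>j\<in>{1..N}. \<tau> j x \<le> Mpoll N T \<tau> x * T"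
proof -
  have "\<tau> 1 x \<le> max 1 (\<tau> 1 x) * T"
    using assms by (metis max.cobounded2 mult.right_neutral mult_le_mono)
  then have "1 \<le> max 1 (\<tau> 1 x) \<and> (\<exists>j\<in>{1..N}. \<tau> j x \<le> max 1 (\<tau> 1 x) * T)"
    using assms by auto
  then have "1 \<le> Mpoll N T \<tau> x \<and> (\<exists>j\<in>{1..N}. \<tau> j x \<le> Mpoll N T \<tau> x * T)"
    unfolding Mpoll_def by (rule LeastI)
  then show "1 \<le> Mpoll N T \<tau> x" and "\<exists>j\<in>{1..N}. \<tau> j x \<le> Mpoll N T \<tau> x * T"
    by auto
qed

lemma Mpoll_le:
  assumes "1 \<le> m" "j \<in> {1..N}" "\<tau> j x \<le> m * T"
  shows "Mpoll N T \<tau> x \<le> m"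
  unfolding Mpoll_def using assms by (intro Least_le) blast

lemma less_Mpoll_imp_gt:
  assumes "1 \<le> m" "m < Mpoll N T \<tau> x" "j \<in> {1..N}"
  shows "m * T < \<tau> j x"
  using assms Mpoll_le[of m j N \<tau> x T] by (meson leD not_le)

lemma Kidx_spec:
  assumes "N \<ge> 1" "T \<ge> 1"
  shows "Kidx N T \<tau> x \<in> {1..N}" and "\<tau> (Kidx N T \<tau> x) x \<le> Mpoll N T \<tau> x * T"
proof -
  let ?P = "\<lambda>j. j \<in> {1..N} \<and> \<tau> j x \<le> Mpoll N T \<tau> x * T"
  obtain j where "?P j"
    using Mpoll_spec(2)[OF assms, of \<tau> x] by blast
  then have "?P (Kidx N T \<tau> x)"
    unfolding Kidx_def by (rule LeastI[of ?P])
  then show "Kidx N T \<tau> x \<in> {1..N}" and "\<tau> (Kidx N T \<tau> x) x \<le> Mpoll N T \<tau> x * T"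
    by auto
qed

lemma Kidx_le:
  assumes "j \<in> {1..N}" "\<tau> j x \<le> Mpoll N T \<tau> x * T"
  shows "Kidx N T \<tau> x \<le> j"
  unfolding Kidx_def using assms by (intro Least_le) blast

lemma less_Kidx_imp_gt:
  assumes "j \<in> {1..N}" "j < Kidx N T \<tau> x"
  shows "Mpoll N T \<tau> x * T < \<tau> j x"
  using assms Kidx_le[of j N \<tau> x T] by (meson leD not_le)

lemma pred_Mpoll_less_clock:
  assumes "\<forall>j\<in>{1..N}. 1 \<le> \<tau> j x" "j \<in> {1..N}"
  shows "(Mpoll N T \<tau> x - 1) * T < \<tau> j x"
proof (cases "Mpoll N T \<tau> x \<le> 1")
  case True
  then show ?thesis using assms by (auto simp: Suc_le_eq)
next
  case False
  then show ?thesis using less_Mpoll_imp_gt[of "Mpoll N T \<tau> x - 1" N T \<tau> x j] assms by auto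
qed

lemma xi_cong:
  assumes N: "N \<ge> 1" and T: "T \<ge> 1" and eq: "\<And>j. j \<in> {1..N} \<Longrightarrow> \<tau> j x = \<sigma> j y"
  shows "xi N T \<tau> x = xi N T \<sigma> y"
proof -
  have M: "Mpoll N T \<tau> x = Mpoll N T \<sigma> y"
    unfolding Mpoll_def using eq by metis
  have "Kidx N T \<tau> x = Kidx N T \<sigma> y"
    unfolding Kidx_def M using eq by metis
  then show ?thesis
    unfolding xi_def M using eq Kidx_spec(1)[OF N T, of \<tau> x] by simp
qed

text \<open>\<open>N * (m - 1) * T + (k - 1) * T + r\<close> is the \<open>r\<close>-th instant of the window of clock \<open>k\<close>
  in polling round \<open>m\<close>; these windows tile the positive integers.\<close>

lemma poll_code_digits:
  fixes N T m k r :: nat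
  assumes "1 \<le> m" "1 \<le> k" "k \<le> N" "1 \<le> r" "r \<le> T"
    and n: "n = N * (m - 1) * T + (k - 1) * T + r"
  shows "m = (n - 1) div (N * T) + 1" "k = (n - 1) div T mod N + 1" "r = (n - 1) mod T + 1"
proof -
  have n1: "n - 1 = ((m - 1) * N + (k - 1)) * T + (r - 1)"
    using assms by (simp add: algebra_simps)
  have digit: "(q * d + s) div d = q \<and> (q * d + s) mod d = s" if "s < d" for q s d :: nat
    using that by simp
  have "(n - 1) div T = (m - 1) * N + (k - 1) \<and> (n - 1) mod T = r - 1"
    unfolding n1 by (rule digit) (use assms in auto)
  moreover have "((m - 1) * N + (k - 1)) div N = m - 1 \<and> ((m - 1) * N + (k - 1)) mod N = k - 1"
    by (rule digit) (use assms in auto)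
  ultimately show "m = (n - 1) div (N * T) + 1" "k = (n - 1) div T mod N + 1" "r = (n - 1) mod T + 1"
    using assms by (simp_all add: div_mult2_eq mult.commute[of N T])
qed

lemma poll_code_exists:
  fixes N T n :: nat
  assumes "N \<ge> 1" "T \<ge> 1" "n \<ge> 1"
  obtains m k r where "1 \<le> m" "1 \<le> k" "k \<le> N" "1 \<le> r" "r \<le> T"
    and "n = N * (m - 1) * T + (k - 1) * T + r"
proof
  define a where "a = (n - 1) div (N * T)"
  define b where "b = (n - 1) div T mod N"
  define c where "c = (n - 1) mod T"
  show "1 \<le> a + 1" "1 \<le> b + 1" "1 \<le> c + 1" by simp_all
  show "b + 1 \<le> N" "c + 1 \<le> T" using assms by (simp_all add: b_def c_def Suc_le_eq)
  have "(n - 1) div T = a * N + b"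
    unfolding a_def b_def by (simp add: div_mult2_eq mult.commute[of N T])
  then have "n - 1 = (a * N + b) * T + c"
    unfolding c_def by (metis div_mult_mod_eq)
  then show "n = N * (a + 1 - 1) * T + (b + 1 - 1) * T + (c + 1)"
    using assms by (simp add: algebra_simps)
qed

lemma xi_eq_iff:
  assumes N: "N \<ge> 1" and T: "T \<ge> 1" and pos: "\<forall>j\<in>{1..N}. 1 \<le> \<tau> j x"
    and mkr: "1 \<le> m" "1 \<le> k" "k \<le> N" "1 \<le> r" "r \<le> T"
  shows "xi N T \<tau> x = N * (m - 1) * T + (k - 1) * T + r \<longleftrightarrow>
    Mpoll N T \<tau> x = m \<and> Kidx N T \<tau> x = k \<and> \<tau> k x = (m - 1) * T + r"
proof -
  define M K where "M = Mpoll N T \<tau> x" and "K = Kidx N T \<tau> x"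
  define R where "R = \<tau> K x - (M - 1) * T"
  have K: "1 \<le> K" "K \<le> N" and M: "1 \<le> M"
    using Kidx_spec(1)[OF N T, of \<tau> x] Mpoll_spec(1)[OF N T, of \<tau> x]
    unfolding K_def M_def by auto
  have "(M - 1) * T < \<tau> K x" "\<tau> K x \<le> (M - 1) * T + T"
    using pred_Mpoll_less_clock[where \<tau>=\<tau> and x=x and T=T, OF pos] Kidx_spec[OF N T, of \<tau> x] M
    unfolding K_def M_def
    by (auto simp: mult_eq_if)
  then have R: "1 \<le> R" "R \<le> T" "\<tau> K x = (M - 1) * T + R"
    unfolding R_def by auto
  have NX: "(N - 1) * X + X = N * X" for X
    using N by (cases N) auto
  have xi: "xi N T \<tau> x = N * (M - 1) * T + (K - 1) * T + R"
    using NX[of "(M - 1) * T"] unfolding xi_def M_def[symmetric] K_def[symmetric] R(3)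
    by (simp add: mult.assoc)
  show ?thesis
    unfolding M_def[symmetric] K_def[symmetric]
  proof
    assume "xi N T \<tau> x = N * (m - 1) * T + (k - 1) * T + r"
    then have "M = m \<and> K = k \<and> R = r"
      using poll_code_digits[OF M K R(1,2) xi] poll_code_digits[OF mkr] by metis
    then show "M = m \<and> K = k \<and> \<tau> k x = (m - 1) * T + r"
      using R(3) by blast
  next
    assume "M = m \<and> K = k \<and> \<tau> k x = (m - 1) * T + r"
    then show "xi N T \<tau> x = N * (m - 1) * T + (k - 1) * T + r"
      using xi R(3) by auto
  qed
qed

lemma Mpoll_eqI:
  assumes N: "N \<ge> 1" and T: "T \<ge> 1" and "1 \<le> m" "j \<in> {1..N}" "\<tau> j x \<le> m * T"
    and above: "\<And>i. i \<in> {1..N} \<Longrightarrow> (m - 1) * T < \<tau> i x"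
  shows "Mpoll N T \<tau> x = m"
proof -
  have "\<not> Mpoll N T \<tau> x \<le> m - 1"
  proof
    assume "Mpoll N T \<tau> x \<le> m - 1"
    then have "Mpoll N T \<tau> x * T \<le> (m - 1) * T" by simp
    moreover obtain i where "i \<in> {1..N}" "\<tau> i x \<le> Mpoll N T \<tau> x * T"
      using Mpoll_spec(2)[OF N T, of \<tau> x] by blast
    ultimately show False using above[of i] by linarith
  qed
  moreover have "Mpoll N T \<tau> x \<le> m"
    using assms by (intro Mpoll_le)
  ultimately show ?thesis by linarith
qed

lemma Kidx_eqI:
  assumes "k \<in> {1..N}" "\<tau> k x \<le> Mpoll N T \<tau> x * T"
    and below: "\<And>j. j \<in> {1..N} \<Longrightarrow> j < k \<Longrightarrow> Mpoll N T \<tau> x * T < \<tau> j x"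
  shows "Kidx N T \<tau> x = k"
  unfolding Kidx_def using assms by (intro Least_equality) (auto simp: not_less[symmetric])

lemma Mpoll_Kidx_eq_iff:
  fixes \<tau> :: "nat \<Rightarrow> 'a \<Rightarrow> nat"
  assumes N: "N \<ge> 1" and T: "T \<ge> 1" and pos: "\<forall>j\<in>{1..N}. 1 \<le> \<tau> j x"
    and mkr: "1 \<le> m" "1 \<le> k" "k \<le> N" "1 \<le> r" "r \<le> T"
  shows "Mpoll N T \<tau> x = m \<and> Kidx N T \<tau> x = k \<and> \<tau> k x = (m - 1) * T + r \<longleftrightarrow>
    (\<forall>j\<in>{1..N}. (j < k \<longrightarrow> m * T < \<tau> j x) \<and> (j = k \<longrightarrow> \<tau> j x = (m - 1) * T + r)
       \<and> (k < j \<longrightarrow> (m - 1) * T < \<tau> j x))" (is "?lhs \<longleftrightarrow> ?rhs")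
proof
  assume lhs: ?lhs
  show ?rhs
  proof (intro ballI conjI impI)
    fix j assume j: "j \<in> {1..N}"
    show "m * T < \<tau> j x" if "j < k"
      using less_Kidx_imp_gt[OF j, where \<tau>=\<tau> and x=x and T=T] that lhs by simp
    show "\<tau> j x = (m - 1) * T + r" if "j = k"
      using that lhs by simp
    show "(m - 1) * T < \<tau> j x" if "k < j"
      using pred_Mpoll_less_clock[where \<tau>=\<tau> and x=x and T=T, OF pos j] lhs by simp
  qed
next
  assume rhs: ?rhs
  have k: "k \<in> {1..N}" using mkr by auto
  have mT: "m * T = (m - 1) * T + T" using mkr by (cases m) auto
  have at_k: "\<tau> k x = (m - 1) * T + r" using rhs k by blast
  then have below: "\<tau> k x \<le> m * T" using mkr unfolding mT by simp
  have above: "(m - 1) * T < \<tau> j x" if j: "j \<in> {1..N}" for j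
  proof -
    consider "j < k" | "j = k" | "k < j" by linarith
    then show ?thesis
    proof cases
      case 1
      then have "m * T < \<tau> j x" using rhs j by blast
      then show ?thesis unfolding mT by linarith
    qed (use rhs j at_k mkr in auto)
  qed
  have M: "Mpoll N T \<tau> x = m"
    by (rule Mpoll_eqI[where \<tau>=\<tau> and x=x, OF N T mkr(1) k below above])
  have "Kidx N T \<tau> x = k"
    using rhs M by (intro Kidx_eqI[OF k]) (auto simp: below)
  then show ?lhs using M at_k by simp
qed

lemma prod_if_less_eq_greater:
  fixes a b c :: "'b :: comm_monoid_mult"
  assumes "1 \<le> k" "k \<le> N"
  shows "(\<Prod>j\<in>{1..N}. if j < k then a else if j = k then b else c) = a ^ (k - 1) * b * c ^ (N - k)"
proof -
  let ?f = "\<lambda>j. if j < k then a else if j = k then b else c"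
  have "{1..N} = {1..<k} \<union> insert k {k<..N}" using assms by auto
  then have "prod ?f {1..N} = prod ?f {1..<k} * prod ?f (insert k {k<..N})"
    by (simp only:) (rule prod.union_disjoint, auto)
  also have "prod ?f {1..<k} = (\<Prod>j\<in>{1..<k}. a)"
    by (rule prod.cong) auto
  also have "prod ?f (insert k {k<..N}) = b * (\<Prod>j\<in>{k<..N}. c)"
    by (simp add: prod.insert_if)
  finally show ?thesis by (simp add: mult.assoc)
qed

lemma (in prob_space) prob_eq_of_geometric_tail:
  fixes X :: "'a \<Rightarrow> nat"
  assumes X: "X \<in> measurable M (count_space UNIV)"
    and tail: "\<And>t. prob {x \<in> space M. t < X x} = (1 - p) ^ t"
  shows "prob {x \<in> space M. X x = t} = (if t = 0 then 0 else (1 - p) ^ (t - 1) * p)"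
proof -
  have ev: "{x \<in> space M. s < X x} \<in> events" for s
    using X by measurable
  show ?thesis
  proof (cases t)
    case 0
    have "{x \<in> space M. X x = t} = space M - {x \<in> space M. 0 < X x}" using 0 by auto
    then show ?thesis
      using prob_compl[OF ev[of 0]] tail[of 0] 0 by simp
  next
    case (Suc s)
    have "{x \<in> space M. X x = t} = {x \<in> space M. s < X x} - {x \<in> space M. t < X x}"
      using Suc by auto
    then have "prob {x \<in> space M. X x = t} = prob {x \<in> space M. s < X x} - prob {x \<in> space M. t < X x}"
      using Suc by (simp add: finite_measure_Diff[OF ev ev] subset_eq)
    then show ?thesis using tail[of s] tail[of t] Suc by (simp add: algebra_simps)
  qed
qed

locale geometric_clocks = prob_space P for P :: "'a measure" +
  fixes \<tau> :: "nat \<Rightarrow> 'a \<Rightarrow> nat" and N T :: nat and p :: real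
  assumes N_ge_1: "N \<ge> 1" and T_ge_1: "T \<ge> 1"
    and indep: "indep_vars (\<lambda>_. count_space UNIV) \<tau> {1..N}"
    and tail: "\<And>j t. j \<in> {1..N} \<Longrightarrow> prob {x \<in> space P. t < \<tau> j x} = (1 - p) ^ t"
begin

lemma measurable_clock: "j \<in> {1..N} \<Longrightarrow> \<tau> j \<in> measurable P (count_space UNIV)"
  using indep unfolding indep_vars_def2 by auto

lemma prob_clock_eq:
  "j \<in> {1..N} \<Longrightarrow> prob {x \<in> space P. \<tau> j x = t} = (if t = 0 then 0 else (1 - p) ^ (t - 1) * p)"
  by (rule prob_eq_of_geometric_tail[OF measurable_clock tail])

lemma AE_clocks_pos: "AE x in P. \<forall>j\<in>{1..N}. 1 \<le> \<tau> j x"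
proof (rule eventually_ball_finite[OF finite_atLeastAtMost], rule ballI)
  fix j assume j: "j \<in> {1..N}"
  have "{x \<in> space P. \<not> 1 \<le> \<tau> j x} = {x \<in> space P. \<tau> j x = 0}" by auto
  with prob_clock_eq[OF j, of 0] show "AE x in P. 1 \<le> \<tau> j x"
    using measurable_clock[OF j] by (subst AE_iff_measurable[OF _ refl]) (auto simp: emeasure_eq_measure)
qed

lemma measurable_xi: "xi N T \<tau> \<in> measurable P (count_space UNIV)"
proof -
  define \<sigma> where "\<sigma> j = (if j \<in> {1..N} then \<tau> j else (\<lambda>_. 0))" for j
  have [measurable]: "\<sigma> j \<in> measurable P (count_space UNIV)" for j
    unfolding \<sigma>_def using measurable_clock by auto
  have "xi N T \<sigma> \<in> measurable P (count_space UNIV)"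
    unfolding xi_def Kidx_def Mpoll_def by measurable
  moreover have "xi N T \<sigma> = xi N T \<tau>"
    by (rule ext, rule xi_cong[OF N_ge_1 T_ge_1]) (simp add: \<sigma>_def)
  ultimately show ?thesis by simp
qed

lemma prob_xi_eq_poll_code:
  assumes mkr: "1 \<le> m" "1 \<le> k" "k \<le> N" "1 \<le> r" "r \<le> T"
  defines "n \<equiv> N * (m - 1) * T + (k - 1) * T + r"
  shows "prob {x \<in> space P. xi N T \<tau> x = n} = (1 - p) ^ (n - 1) * p"
proof -
  define B where "B j = (if j < k then {m * T<..} else if j = k then {(m - 1) * T + r}
    else {(m - 1) * T<..})" for j
  have ev: "\<tau> j -` A \<inter> space P \<in> events" if "j \<in> {1..N}" for j A
    using measurable_clock[OF that] by (simp add: measurable_sets)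
  have "prob {x \<in> space P. xi N T \<tau> x = n} = prob (\<Inter>j\<in>{1..N}. \<tau> j -` B j \<inter> space P)"
  proof (rule measure_eq_AE)
    show "AE x in P. x \<in> {x \<in> space P. xi N T \<tau> x = n}
        \<longleftrightarrow> x \<in> (\<Inter>j\<in>{1..N}. \<tau> j -` B j \<inter> space P)"
      using AE_clocks_pos AE_space
    proof eventually_elim
      case (elim x)
      have "xi N T \<tau> x = n \<longleftrightarrow> (\<forall>j\<in>{1..N}. \<tau> j x \<in> B j)"
        unfolding n_def xi_eq_iff[where \<tau>=\<tau> and x=x, OF N_ge_1 T_ge_1 elim(1) mkr]
          Mpoll_Kidx_eq_iff[where \<tau>=\<tau> and x=x, OF N_ge_1 T_ge_1 elim(1) mkr] B_def
        by (intro ball_cong refl) auto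
      then show ?case using elim(2) N_ge_1 by auto
    qed
    show "{x \<in> space P. xi N T \<tau> x = n} \<in> events"
      using measurable_xi by measurable
    show "(\<Inter>j\<in>{1..N}. \<tau> j -` B j \<inter> space P) \<in> events"
      using ev N_ge_1 by (intro sets.finite_INT) auto
  qed
  also have "\<dots> = (\<Prod>j\<in>{1..N}. prob (\<tau> j -` B j \<inter> space P))"
    using N_ge_1 by (intro indep_varsD_finite[OF indep]) auto
  also have "\<dots> = (\<Prod>j\<in>{1..N}. if j < k then (1 - p) ^ (m * T)
      else if j = k then (1 - p) ^ ((m - 1) * T + r - 1) * p else (1 - p) ^ ((m - 1) * T))"
  proof (rule prod.cong[OF refl])
    fix j assume j: "j \<in> {1..N}"
    have "\<tau> j -` A \<inter> space P = {x \<in> space P. \<tau> j x \<in> A}" for A by auto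
    then show "prob (\<tau> j -` B j \<inter> space P) = (if j < k then (1 - p) ^ (m * T)
      else if j = k then (1 - p) ^ ((m - 1) * T + r - 1) * p else (1 - p) ^ ((m - 1) * T))"
      using tail[OF j] prob_clock_eq[of k] mkr by (simp add: B_def)
  qed
  also have "\<dots> = ((1 - p) ^ (m * T)) ^ (k - 1) * ((1 - p) ^ ((m - 1) * T + r - 1) * p)
      * ((1 - p) ^ ((m - 1) * T)) ^ (N - k)"
    by (rule prod_if_less_eq_greater[OF mkr(2,3)])
  also have "\<dots> = (1 - p) ^ (m * T * (k - 1) + ((m - 1) * T + r - 1) + (m - 1) * T * (N - k)) * p"
    by (simp add: power_add power_mult)
  also have "m * T * (k - 1) + ((m - 1) * T + r - 1) + (m - 1) * T * (N - k) = n - 1"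
  proof -
    obtain m' where m: "m = Suc m'" using mkr(1) by (cases m) auto
    obtain k' where k: "k = Suc k'" using mkr(2) by (cases k) auto
    obtain r' where r: "r = Suc r'" using mkr(4) by (cases r) auto
    obtain d where N: "N = k + d" using mkr(3) by (metis le_add_diff_inverse)
    show ?thesis unfolding n_def m k r N by (simp add: algebra_simps)
  qed
  finally show ?thesis .
qed

lemma prob_xi_eq: "prob {x \<in> space P. xi N T \<tau> x = n} = prob {x \<in> space P. \<tau> 1 x = n}"
proof (cases "n = 0")
  case True
  have "AE x in P. xi N T \<tau> x \<noteq> 0"
    using AE_clocks_pos
  proof eventually_elim
    case (elim x)
    then have "1 \<le> \<tau> (Kidx N T \<tau> x) x" using Kidx_spec(1)[OF N_ge_1 T_ge_1, of \<tau> x] by blast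
    then show ?case by (simp add: xi_def)
  qed
  then have "prob {x \<in> space P. xi N T \<tau> x = 0} = 0"
    by (intro prob_eq_0_AE) simp
  then show ?thesis using True prob_clock_eq[of 1 0] N_ge_1 by simp
next
  case False
  then obtain m k r where mkr: "1 \<le> m" "1 \<le> k" "k \<le> N" "1 \<le> r" "r \<le> T"
    and n: "n = N * (m - 1) * T + (k - 1) * T + r"
    using poll_code_exists[OF N_ge_1 T_ge_1] by (metis less_one not_le)
  have "prob {x \<in> space P. xi N T \<tau> x = n} = (1 - p) ^ (n - 1) * p"
    using prob_xi_eq_poll_code[OF mkr] n by simp
  moreover have "prob {x \<in> space P. \<tau> 1 x = n} = (1 - p) ^ (n - 1) * p"
    using prob_clock_eq[of 1 n] False N_ge_1 by simp
  ultimately show ?thesis by simp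
qed

lemma distr_xi_eq_distr_clock:
  "distr P (count_space UNIV) (xi N T \<tau>) = distr P (count_space UNIV) (\<tau> 1)"
proof (rule measure_eqI_countable[where A = UNIV])
  fix n :: nat
  have "\<tau> 1 \<in> measurable P (count_space UNIV)" using measurable_clock N_ge_1 by simp
  moreover have "\<tau> 1 -` {n} \<inter> space P = {x \<in> space P. \<tau> 1 x = n}"
    and "xi N T \<tau> -` {n} \<inter> space P = {x \<in> space P. xi N T \<tau> x = n}" by auto
  ultimately show "emeasure (distr P (count_space UNIV) (xi N T \<tau>)) {n}
      = emeasure (distr P (count_space UNIV) (\<tau> 1)) {n}"
    using prob_xi_eq[of n] measurable_xi by (simp add: emeasure_distr emeasure_eq_measure)
qed auto

end

text \<open>The hypotheses \<open>0 < p\<close> and \<open>p \<le> 1\<close> are implied by the tail condition (at \<open>t = 1\<close>, and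
  by continuity of the measure as \<open>t \<rightarrow> \<infinity>\<close>), so \<open>geometric_clocks\<close> omits them.\<close>

theorem lemma1:
  fixes P :: "'a measure" and \<tau> :: "nat \<Rightarrow> 'a \<Rightarrow> nat"
    and N T :: nat and p :: real
  assumes "prob_space P"
    and "N \<ge> 1" and "T \<ge> 1"
    and "0 < p" and "p \<le> 1"
    and "prob_space.indep_vars P (\<lambda>_. count_space UNIV) \<tau> {1..N}"
    and "\<And>j t. j \<in> {1..N} \<Longrightarrow> measure P {x \<in> space P. \<tau> j x > t} = (1 - p) ^ t"
  shows "distr P (count_space UNIV) (xi N T \<tau>) = distr P (count_space UNIV) (\<tau> 1)"
proof -
  interpret prob_space P by fact
  interpret geometric_clocks P \<tau> N T p
    by unfold_locales (fact assms)+
  show ?thesis by (rule distr_xi_eq_distr_clock)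
qed

end
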